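(* Let $f:E\to\mathbb{R}$ be $L$-smooth (not necessarily convex) and attain its minimum at $x_*$, and let $\varepsilon>0$. If Algorithm UAGMsDR with accuracy $\varepsilon$ is run for $N\ge1$ steps, then $$\min_{k=0,\dots,N-1}\|\nabla f(y^k)\|_*^2\le\frac{2L(f(x^0)-f(x_* ))}{N}+L\varepsilon.$$
   Context: $E$ is a finite-dimensional real vector space with a norm $\|\cdot\|$; $E^*$ is its dual, $\langle g,x\rangle$ denotes the value of $g\in E^*$ at $x\in E$, and $\|g\|_*=\max\{\langle g,x\rangle:\|x\|\le 1\}$. For $g\in E^*$, $g^{\#}$ denotes a (fixed) element $s\in E$ with $\|s\|\le 1$ and $\langle g,s\rangle=\|g\|_*$. A prox-function $d:E\to\mathbb{R}$ is continuously differentiable, convex, $1$-strongly convex with respect to $\|\cdot\|$ and satisfies $\min_E d=0$; its Bregman divergence is $V(x,z)=d(x)-d(z)-\langle\nabla d(z),x-z\rangle$. $f$ is $L$-smooth if it is continuously differentiable and $\|\nabla f(x)-\nabla f(y)\|_*\le L\|x-y\|$ for all $x,y\in E$. Algorithm UAGMsDR (input $x^0\in E$, accuracy $\varepsilon>0$): set $A_0=0$, $v^0=x^0$, $\psi_0(x)=V(x,x^0)$. For $k=0,1,2,\dots$: 1. Choose $\beta_k\in\arg\min_{\beta\in[0,1]}f(v^k+\beta(x^k-v^k))$, set $y^k=v^k+\beta_k(x^k-v^k)$. 2. $h_{k+1}\in\arg\min_{h\ge0}f(y^k-h(\nabla f(y^k))^{\#})$, $x^{k+1}=y^k-h_{k+1}(\nabla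 f(y^k))^{\#}$; $a_{k+1}$ is the largest solution of $f(y^k)-\frac{a_{k+1}^2}{2(A_k+a_{k+1})}\|\nabla f(y^k)\|_*^2+\frac{\varepsilon a_{k+1}}{2(A_k+a_{k+1})}=f(x^{k+1})$. 3. $A_{k+1}=A_k+a_{k+1}$; $\psi_{k+1}(x)=\psi_k(x)+a_{k+1}\{f(y^k)+\langle\nabla f(y^k),x-y^k\rangle\}$; $v^{k+1}=\arg\min_{x\in E}\psi_{k+1}(x)$. All minima are assumed attained, and $\nabla f(y^k)\ne0$ for all iterations considered. *)

theory Defs
  imports "HOL-Analysis.Analysis"
begin

text \<open>The finite-dimensional space E is modelled by a type of class euclidean_space,
equipped with an ARBITRARY norm nrm (not necessarily the Euclidean one).
The dual space E* is identified with E via the standard inner product: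
the functional g acts by x \<mapsto> g \<bullet> x.\<close>

definition is_norm :: "('a::real_vector \<Rightarrow> real) \<Rightarrow> bool" where
  "is_norm nrm \<longleftrightarrow>
     (\<forall>x. 0 \<le> nrm x) \<and> (\<forall>x. nrm x = 0 \<longleftrightarrow> x = 0) \<and>
     (\<forall>c x. nrm (c *\<^sub>R x) = \<bar>c\<bar> * nrm x) \<and>
     (\<forall>x y. nrm (x + y) \<le> nrm x + nrm y)"

definition dual_norm :: "('a::real_inner \<Rightarrow> real) \<Rightarrow> 'a \<Rightarrow> real" where
  "dual_norm nrm g = (SUP x\<in>{x. nrm x \<le> 1}. g \<bullet> x)"

definition has_gradient_fun :: "('a::real_inner \<Rightarrow> real) \<Rightarrow> ('a \<Rightarrow> 'a) \<Rightarrow> bool" where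
  "has_gradient_fun f gf \<longleftrightarrow> (\<forall>x. (f has_derivative (\<lambda>h. gf x \<bullet> h)) (at x))"

definition L_smooth :: "('a::real_inner \<Rightarrow> real) \<Rightarrow> real \<Rightarrow> ('a \<Rightarrow> real) \<Rightarrow> ('a \<Rightarrow> 'a) \<Rightarrow> bool" where
  "L_smooth nrm L f gf \<longleftrightarrow> has_gradient_fun f gf \<and> continuous_on UNIV gf \<and>
     (\<forall>x y. dual_norm nrm (gf x - gf y) \<le> L * nrm (x - y))"

definition prox_function :: "('a::real_inner \<Rightarrow> real) \<Rightarrow> ('a \<Rightarrow> real) \<Rightarrow> ('a \<Rightarrow> 'a) \<Rightarrow> bool" where
  "prox_function nrm d gd \<longleftrightarrow> has_gradient_fun d gd \<and> continuous_on UNIV gd \<and>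
     convex_on UNIV d \<and>
     (\<forall>x y t. 0 \<le> t \<and> t \<le> 1 \<longrightarrow>
        d (t *\<^sub>R x + (1 - t) *\<^sub>R y) \<le> t * d x + (1 - t) * d y - t * (1 - t) / 2 * (nrm (x - y))\<^sup>2) \<and>
     (\<forall>x. 0 \<le> d x) \<and> (\<exists>x. d x = 0)"

definition bregman :: "('a::real_inner \<Rightarrow> real) \<Rightarrow> ('a \<Rightarrow> 'a) \<Rightarrow> 'a \<Rightarrow> 'a \<Rightarrow> real" where
  "bregman d gd x z = d x - d z - gd z \<bullet> (x - z)"

end

theory Submission
  imports Defs
begin

text \<open>Only the descent part of the method matters for this bound. Step 2 is an exact line
search along the steepest-descent direction, the sharp of the gradient at y_k, so by the descent
lemma it decreases f by at least the squared dual norm of that gradient divided by 2L; the line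
search of step 1 includes beta = 1, so f(y_k) <= f(x_k). Summing over k telescopes to
f(x_0) - f(x_N) <= f(x_0) - f(x_*), and the minimum is at most the average.\<close>

lemma is_normD:
  assumes "is_norm nrm"
  shows is_norm_nonneg: "0 \<le> nrm x"
    and is_norm_eq_0: "nrm x = 0 \<longleftrightarrow> x = 0"
    and is_norm_scaleR: "nrm (c *\<^sub>R x) = \<bar>c\<bar> * nrm x"
    and is_norm_triangle: "nrm (x + y) \<le> nrm x + nrm y"
  using assms unfolding is_norm_def by auto

lemma is_norm_zero:
  assumes "is_norm nrm"
  shows "nrm 0 = 0"
  using is_norm_eq_0[OF assms] by simp

lemma is_norm_minus_commute:
  assumes "is_norm nrm"
  shows "nrm (x - y) = nrm (y - x)"
  using is_norm_scaleR[OF assms, of "-1" "x - y"] by simp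

lemma is_norm_sum:
  assumes "is_norm nrm"
  shows "nrm (sum g S) \<le> (\<Sum>i\<in>S. nrm (g i))"
proof (induction S rule: infinite_finite_induct)
  case (insert i S)
  then show ?case using is_norm_triangle[OF assms, of "g i" "sum g S"] by simp
qed (simp_all add: is_norm_zero[OF assms])

lemma is_norm_le_norm:
  fixes nrm :: "'a::euclidean_space \<Rightarrow> real"
  assumes "is_norm nrm"
  shows "nrm x \<le> (\<Sum>b\<in>Basis. nrm b) * norm x"
proof -
  have "nrm x = nrm (\<Sum>b\<in>Basis. (x \<bullet> b) *\<^sub>R b)" by (simp add: euclidean_representation)
  also have "\<dots> \<le> (\<Sum>b\<in>Basis. nrm ((x \<bullet> b) *\<^sub>R b))" by (rule is_norm_sum[OF assms])
  also have "\<dots> = (\<Sum>b\<in>Basis. \<bar>x \<bullet> b\<bar> * nrm b)" by (simp add: is_norm_scaleR[OF assms])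
  also have "\<dots> \<le> (\<Sum>b\<in>Basis. norm x * nrm b)"
    by (intro sum_mono mult_right_mono) (simp_all add: Basis_le_norm is_norm_nonneg[OF assms])
  also have "\<dots> = norm x * (\<Sum>b\<in>Basis. nrm b)" by (rule sum_distrib_left[symmetric])
  finally show ?thesis by (simp add: mult.commute)
qed

lemma continuous_on_is_norm:
  fixes nrm :: "'a::euclidean_space \<Rightarrow> real"
  assumes "is_norm nrm"
  shows "continuous_on S nrm"
proof (rule lipschitz_on_continuous_on)
  let ?C = "\<Sum>b\<in>Basis. nrm b"
  show "?C-lipschitz_on S nrm"
  proof (rule lipschitz_onI)
    fix x y
    have "nrm x - nrm y \<le> nrm (x - y)" "nrm y - nrm x \<le> nrm (x - y)"
      using is_norm_triangle[OF assms, of "x - y" y] is_norm_triangle[OF assms, of "y - x" x]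
        is_norm_minus_commute[OF assms, of x y] by auto
    then show "dist (nrm x) (nrm y) \<le> ?C * dist x y"
      using is_norm_le_norm[OF assms, of "x - y"] by (simp add: dist_real_def dist_norm)
  qed (simp add: sum_nonneg is_norm_nonneg[OF assms])
qed

text \<open>Equivalence of norms in finite dimension: the minimum of nrm on the Euclidean unit
sphere is positive.\<close>
lemma is_norm_ge_norm:
  fixes nrm :: "'a::euclidean_space \<Rightarrow> real"
  assumes "is_norm nrm"
  obtains m where "m > 0" "\<And>x. m * norm x \<le> nrm x"
proof -
  have "sphere (0::'a) 1 \<noteq> {}" by (metis norm_Basis SOME_Basis mem_sphere_0 empty_iff)
  then obtain p where p: "p \<in> sphere 0 1" "\<And>z. z \<in> sphere 0 1 \<Longrightarrow> nrm p \<le> nrm z"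
    using continuous_attains_inf[OF compact_sphere _ continuous_on_is_norm[OF assms]] by blast
  have "nrm p > 0"
    using p(1) is_norm_eq_0[OF assms, of p] is_norm_nonneg[OF assms, of p] by force
  moreover have "nrm p * norm x \<le> nrm x" for x
  proof (cases "x = 0")
    case False
    have "nrm p \<le> nrm ((1 / norm x) *\<^sub>R x)" using p(2) False by simp
    then show ?thesis using False by (simp add: is_norm_scaleR[OF assms] field_simps)
  qed (simp add: is_norm_nonneg[OF assms])
  ultimately show thesis by (rule that)
qed

lemma bdd_above_dual_norm:
  fixes nrm :: "'a::euclidean_space \<Rightarrow> real"
  assumes "is_norm nrm"
  shows "bdd_above ((\<lambda>x. g \<bullet> x) ` {x. nrm x \<le> 1})"
proof -
  obtain m where m: "m > 0" "\<And>x. m * norm x \<le> nrm x" using is_norm_ge_norm[OF assms] by blast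
  show ?thesis
  proof (rule bdd_aboveI2)
    fix x assume "x \<in> {x. nrm x \<le> 1}"
    then have "norm x \<le> 1 / m" using m(2)[of x] m(1) by (simp add: field_simps)
    then have "norm g * norm x \<le> norm g / m" by (simp add: mult_left_mono divide_inverse)
    then show "g \<bullet> x \<le> norm g / m" using Cauchy_Schwarz_ineq2[of g x] by linarith
  qed
qed

lemma inner_le_dual_norm:
  fixes nrm :: "'a::euclidean_space \<Rightarrow> real"
  assumes "is_norm nrm" "nrm s \<le> 1"
  shows "g \<bullet> s \<le> dual_norm nrm g"
  unfolding dual_norm_def using assms bdd_above_dual_norm[OF assms(1)] by (auto intro: cSUP_upper)

lemma dual_norm_nonneg:
  fixes nrm :: "'a::euclidean_space \<Rightarrow> real"
  assumes "is_norm nrm"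
  shows "0 \<le> dual_norm nrm g"
  using inner_le_dual_norm[OF assms, of 0 g] is_norm_zero[OF assms] by simp

lemma L_smooth_nonneg:
  fixes nrm :: "'a::euclidean_space \<Rightarrow> real"
  assumes "is_norm nrm" "L_smooth nrm L f gf"
  shows "0 \<le> L"
proof -
  obtain b :: 'a where "b \<in> Basis" by (metis SOME_Basis)
  then have "nrm b > 0"
    using is_norm_eq_0[OF assms(1), of b] is_norm_nonneg[OF assms(1), of b] by force
  moreover have "0 \<le> L * nrm b"
    using assms(2) dual_norm_nonneg[OF assms(1), of "gf b - gf 0"]
    unfolding L_smooth_def by (metis diff_zero order_trans)
  ultimately show ?thesis by (simp add: zero_le_mult_iff)
qed

text \<open>The descent lemma along a direction s of norm at most 1: the proof shows that
\<tau> \<mapsto> f(y - \<tau> s) + \<tau> <gf y, s> - L \<tau>^2/2 is nonincreasing on [0, \<infinity>).\<close>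
lemma L_smooth_descent:
  fixes nrm :: "'a::euclidean_space \<Rightarrow> real"
  assumes "is_norm nrm" "L_smooth nrm L f gf" "nrm s \<le> 1" "0 \<le> t"
  shows "f (y - t *\<^sub>R s) \<le> f y - t * (gf y \<bullet> s) + L * t\<^sup>2 / 2"
proof -
  have grad: "\<And>z. (f has_derivative (\<lambda>h. gf z \<bullet> h)) (at z)"
    using assms(2) unfolding L_smooth_def has_gradient_fun_def by blast
  define \<phi> where "\<phi> \<tau> = f (y - \<tau> *\<^sub>R s) + \<tau> * (gf y \<bullet> s) - L * \<tau>\<^sup>2 / 2" for \<tau>
  have "\<phi> t \<le> \<phi> 0"
  proof (rule DERIV_nonpos_imp_nonincreasing[OF assms(4)])
    fix \<tau> :: real assume \<tau>: "0 \<le> \<tau>" "\<tau> \<le> t"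
    have "((\<lambda>\<tau>. f (y - \<tau> *\<^sub>R s)) has_derivative (\<lambda>h. gf (y - \<tau> *\<^sub>R s) \<bullet> (- (h *\<^sub>R s)))) (at \<tau>)"
      by (rule has_derivative_compose[OF _ grad]) (auto intro!: derivative_eq_intros)
    then have "((\<lambda>\<tau>. f (y - \<tau> *\<^sub>R s)) has_real_derivative - (gf (y - \<tau> *\<^sub>R s) \<bullet> s)) (at \<tau>)"
      unfolding has_field_derivative_def
      by (rule has_derivative_eq_rhs) (simp add: fun_eq_iff inner_minus_right)
    then have deriv: "(\<phi> has_real_derivative
        - (gf (y - \<tau> *\<^sub>R s) \<bullet> s) + gf y \<bullet> s - L * \<tau>) (at \<tau>)"
      unfolding \<phi>_def by (auto intro!: derivative_eq_intros)
    have "(gf y - gf (y - \<tau> *\<^sub>R s)) \<bullet> s \<le> dual_norm nrm (gf y - gf (y - \<tau> *\<^sub>R s))"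
      by (rule inner_le_dual_norm[OF assms(1,3)])
    also have "\<dots> \<le> L * nrm (\<tau> *\<^sub>R s)"
      using assms(2) unfolding L_smooth_def by (metis add_diff_cancel_left' diff_add_cancel)
    also have "\<dots> \<le> L * \<tau>"
      using L_smooth_nonneg[OF assms(1,2)] \<tau> assms(3)
      by (simp add: is_norm_scaleR[OF assms(1)] mult_left_mono mult_left_le)
    finally show "\<exists>D. (\<phi> has_real_derivative D) (at \<tau>) \<and> D \<le> 0"
      using deriv by (intro exI[of _ "- (gf (y - \<tau> *\<^sub>R s) \<bullet> s) + gf y \<bullet> s - L * \<tau>"])
        (simp add: inner_diff_left)
  qed
  then show ?thesis unfolding \<phi>_def by simp
qed

text \<open>Minimising the quadratic majorant at t = g/L; for L = 0 the hypothesis forces g = 0.\<close>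
lemma quadratic_lower_bound_imp_sq_le:
  fixes b c g L :: real
  assumes "0 \<le> g" "0 \<le> L" and bound: "\<And>t. 0 \<le> t \<Longrightarrow> c \<le> b - t * g + L * t\<^sup>2 / 2"
  shows "g\<^sup>2 \<le> 2 * L * (b - c)"
proof (cases "L = 0")
  case True
  have "g = 0"
  proof (rule ccontr)
    assume "g \<noteq> 0"
    then have "c \<le> b - (\<bar>b - c\<bar> + 1)"
      using bound[of "(\<bar>b - c\<bar> + 1) / g"] True assms(1) by simp
    then show False by linarith
  qed
  then show ?thesis using True by simp
next
  case False
  then have "c \<le> b - g\<^sup>2 / (2 * L)"
    using bound[of "g / L"] assms by (simp add: field_simps power2_eq_square)
  then show ?thesis using False assms(2) by (simp add: field_simps)
qed

lemma exact_line_search_decrease: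
  fixes nrm :: "'a::euclidean_space \<Rightarrow> real"
  assumes "is_norm nrm" "L_smooth nrm L f gf"
    and "nrm s \<le> 1" "gf y \<bullet> s = dual_norm nrm (gf y)"
    and "\<And>t. 0 \<le> t \<Longrightarrow> f y' \<le> f (y - t *\<^sub>R s)"
  shows "(dual_norm nrm (gf y))\<^sup>2 \<le> 2 * L * (f y - f y')"
proof (rule quadratic_lower_bound_imp_sq_le)
  show "0 \<le> dual_norm nrm (gf y)" by (rule dual_norm_nonneg[OF assms(1)])
  show "0 \<le> L" by (rule L_smooth_nonneg[OF assms(1,2)])
  show "f y' \<le> f y - t * dual_norm nrm (gf y) + L * t\<^sup>2 / 2" if "0 \<le> t" for t
    using assms(5)[OF that] L_smooth_descent[OF assms(1-3) that, of y] assms(4) by simp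
qed

lemma Min_le_telescope_average:
  fixes D F :: "nat \<Rightarrow> real"
  assumes "N \<ge> 1" "\<And>k. k < N \<Longrightarrow> D k \<le> F k - F (Suc k)"
  shows "(MIN k\<in>{..<N}. D k) \<le> (F 0 - F N) / real N"
proof -
  have "real N * (MIN k\<in>{..<N}. D k) = (\<Sum>k<N. MIN k\<in>{..<N}. D k)" by simp
  also have "\<dots> \<le> (\<Sum>k<N. F k - F (Suc k))"
    using assms(2) by (intro sum_mono) (meson Min_le finite_lessThan finite_imageI
      image_eqI lessThan_iff order_trans)
  also have "\<dots> = F 0 - F N" by (rule sum_lessThan_telescope')
  finally show ?thesis using assms(1) by (simp add: field_simps)
qed

theorem mainTheorem11:
  fixes nrm :: "'a::euclidean_space \<Rightarrow> real"
    and f :: "'a \<Rightarrow> real" and gf :: "'a \<Rightarrow> 'a" and L :: real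
    and d :: "'a \<Rightarrow> real" and gd :: "'a \<Rightarrow> 'a"
    and sharp :: "'a \<Rightarrow> 'a"
    and xs x0 :: 'a and \<epsilon> :: real and N :: nat
    and x y v :: "nat \<Rightarrow> 'a" and \<beta> h a A :: "nat \<Rightarrow> real"
    and \<psi> :: "nat \<Rightarrow> 'a \<Rightarrow> real"
  assumes norm: "is_norm nrm"
    and smooth: "L_smooth nrm L f gf"
    and prox: "prox_function nrm d gd"
    and sharp: "\<And>g. nrm (sharp g) \<le> 1 \<and> g \<bullet> sharp g = dual_norm nrm g"
    and xs_min: "\<And>z. f xs \<le> f z"
    and eps: "\<epsilon> > 0"
    and N: "N \<ge> 1"
    and init_x: "x 0 = x0" and init_A: "A 0 = 0" and init_v: "v 0 = x0"
    and init_psi: "\<psi> 0 = (\<lambda>z. bregman d gd z x0)"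
    and beta: "\<And>k. k < N \<Longrightarrow> \<beta> k \<in> {0..1} \<and>
        (\<forall>b\<in>{0..1}. f (v k + \<beta> k *\<^sub>R (x k - v k)) \<le> f (v k + b *\<^sub>R (x k - v k)))"
    and y_def: "\<And>k. k < N \<Longrightarrow> y k = v k + \<beta> k *\<^sub>R (x k - v k)"
    and h_step: "\<And>k. k < N \<Longrightarrow> h (Suc k) \<ge> 0 \<and>
        (\<forall>t\<ge>0. f (y k - h (Suc k) *\<^sub>R sharp (gf (y k))) \<le> f (y k - t *\<^sub>R sharp (gf (y k))))"
    and x_step: "\<And>k. k < N \<Longrightarrow> x (Suc k) = y k - h (Suc k) *\<^sub>R sharp (gf (y k))"
    and a_step: "\<And>k. k < N \<Longrightarrow> is_arg_max id (\<lambda>\<alpha>.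
        f (y k) - \<alpha>\<^sup>2 / (2 * (A k + \<alpha>)) * (dual_norm nrm (gf (y k)))\<^sup>2
          + \<epsilon> * \<alpha> / (2 * (A k + \<alpha>)) = f (x (Suc k))) (a (Suc k))"
    and A_step: "\<And>k. k < N \<Longrightarrow> A (Suc k) = A k + a (Suc k)"
    and psi_step: "\<And>k. k < N \<Longrightarrow> \<psi> (Suc k) =
        (\<lambda>z. \<psi> k z + a (Suc k) * (f (y k) + gf (y k) \<bullet> (z - y k)))"
    and v_step: "\<And>k. k < N \<Longrightarrow> (\<forall>z. \<psi> (Suc k) (v (Suc k)) \<le> \<psi> (Suc k) z)"
    and grad_nz: "\<And>k. k < N \<Longrightarrow> gf (y k) \<noteq> 0"
  shows "(MIN k\<in>{..<N}. (dual_norm nrm (gf (y k)))\<^sup>2)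
           \<le> 2 * L * (f x0 - f xs) / real N + L * \<epsilon>"
proof -
  have L0: "0 \<le> L" by (rule L_smooth_nonneg[OF norm smooth])
  have decrease: "(dual_norm nrm (gf (y k)))\<^sup>2 \<le> 2 * L * f (x k) - 2 * L * f (x (Suc k))"
    if k: "k < N" for k
  proof -
    have "f (y k) \<le> f (x k)"
      using beta[OF k] y_def[OF k] by (metis atLeastAtMost_iff scaleR_one add.commute
        diff_add_cancel order_refl zero_le_one)
    then have "2 * L * (f (y k) - f (x (Suc k))) \<le> 2 * L * (f (x k) - f (x (Suc k)))"
      using L0 by (intro mult_left_mono) auto
    moreover have "(dual_norm nrm (gf (y k)))\<^sup>2 \<le> 2 * L * (f (y k) - f (x (Suc k)))"
      using sharp h_step[OF k] x_step[OF k] by (intro exact_line_search_decrease[OF norm smooth]) auto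
    ultimately show ?thesis by (simp add: right_diff_distrib)
  qed
  have "(MIN k\<in>{..<N}. (dual_norm nrm (gf (y k)))\<^sup>2) \<le> (2 * L * f x0 - 2 * L * f (x N)) / real N"
    using Min_le_telescope_average[of N "\<lambda>k. (dual_norm nrm (gf (y k)))\<^sup>2" "\<lambda>k. 2 * L * f (x k)"]
      N decrease init_x by simp
  also have "\<dots> \<le> 2 * L * (f x0 - f xs) / real N"
    using xs_min[of "x N"] L0 by (intro divide_right_mono) (auto simp: algebra_simps mult_left_mono)
  finally show ?thesis using L0 eps by (simp add: add_increasing2)
qed

end
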